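(* Let $0<\lambda<\frac{5-\sqrt{21}}{2}$ and let $K$ be the attractor of the IFS $f_1(x)=\lambda x$, $f_2(x)=\lambda x+2\lambda$, $f_3(x)=\lambda x+3\lambda-\lambda^2$, $f_4(x)=\lambda x+1-\lambda$. Then every $x\in K$ either has exactly $2^k$ codings for some integer $k\ge0$, or has uncountably many codings.
   Context: A coding of $x\in K$ is a sequence $(i_n)\in\{1,2,3,4\}^{\mathbb{N}}$ with $x=\lim_{n\to\infty}f_{i_1}\circ\cdots\circ f_{i_n}(0)$. *)

theory Defs
  imports "HOL-Analysis.Analysis"
begin

definition ifs_map :: "real \<Rightarrow> nat \<Rightarrow> real \<Rightarrow> real" where
  "ifs_map l i x =
     (if i = 1 then l * x
      else if i = 2 then l * x + 2 * l
      else if i = 3 then l * x + 3 * l - l^2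
      else l * x + 1 - l)"

text \<open>f_{c 0} o f_{c 1} o ... o f_{c (n-1)}; the sequence (i_1, i_2, ...) is c 0, c 1, ...\<close>
definition ifs_comp :: "real \<Rightarrow> (nat \<Rightarrow> nat) \<Rightarrow> nat \<Rightarrow> real \<Rightarrow> real" where
  "ifs_comp l c n = foldr (\<lambda>k g. ifs_map l (c k) \<circ> g) [0..<n] id"

definition is_coding :: "real \<Rightarrow> real \<Rightarrow> (nat \<Rightarrow> nat) \<Rightarrow> bool" where
  "is_coding l x c \<longleftrightarrow> (\<forall>n. c n \<in> {1,2,3,4}) \<and> (\<lambda>n. ifs_comp l c n 0) \<longlonglongrightarrow> x"

definition codings :: "real \<Rightarrow> real \<Rightarrow> (nat \<Rightarrow> nat) set" where
  "codings l x = {c. is_coding l x c}"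

end

theory Submission
  imports Defs
begin

text \<open>
  The only coincidence among compositions of the maps is \<open>f\<^sub>2 \<circ> f\<^sub>4 = f\<^sub>3 \<circ> f\<^sub>1\<close>.
  For \<open>\<lambda> < (5 - \<surd>21)/2\<close> the first-level images of \<open>K \<subseteq> [0,1]\<close> meet only where
  \<open>f\<^sub>2(K)\<close> and \<open>f\<^sub>3(K)\<close> overlap, and comparing two codings of the same point digit by
  digit shows that they can differ only by exchanging blocks \<open>24 \<leftrightarrow> 31\<close>.  Such blocks
  never overlap, so fixing one coding \<open>c\<close> of \<open>x\<close>, the codings of \<open>x\<close> correspond bijectively
  to the subsets of the set \<open>B\<close> of block positions of \<open>c\<close>: there are \<open>2\<^bsup>|B|\<^esup>\<close> of them if \<open>B\<close>
  is finite and uncountably many otherwise.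
\<close>

definition digit_seqs :: "(nat \<Rightarrow> nat) set" where
  "digit_seqs = {c. \<forall>n. c n \<in> {1,2,3,4}}"

definition coding_value :: "real \<Rightarrow> (nat \<Rightarrow> nat) \<Rightarrow> real" where
  "coding_value l c = (\<Sum>k. l^k * ifs_map l (c k) 0)"

definition seq_drop :: "nat \<Rightarrow> (nat \<Rightarrow> 'a) \<Rightarrow> nat \<Rightarrow> 'a" where
  "seq_drop n c = (\<lambda>k. c (n + k))"

definition swap_blocks :: "(nat \<Rightarrow> nat) \<Rightarrow> nat set" where
  "swap_blocks c = {n. (c n, c (Suc n)) \<in> {(2,4), (3,1)}}"

text \<open>The digit map \<open>i \<mapsto> 5 - i\<close> exchanges \<open>2 \<leftrightarrow> 3\<close> and \<open>4 \<leftrightarrow> 1\<close>, so it turns a block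
  \<open>24\<close> into \<open>31\<close> and back.\<close>
definition flip_blocks :: "(nat \<Rightarrow> nat) \<Rightarrow> nat set \<Rightarrow> nat \<Rightarrow> nat" where
  "flip_blocks c F n = (if n \<in> F \<union> Suc ` F then 5 - c n else c n)"

lemma ifs_map_eq: "ifs_map l i y = l * y + ifs_map l i 0"
  by (simp add: ifs_map_def)

lemma ifs_map_0_simps:
  "ifs_map l 1 0 = 0" "ifs_map l (Suc 0) 0 = 0" "ifs_map l 2 0 = 2 * l"
  "ifs_map l 3 0 = 3 * l - l^2" "ifs_map l 4 0 = 1 - l"
  by (simp_all add: ifs_map_def)

lemma seq_drop_apply [simp]: "seq_drop n c k = c (n + k)"
  by (simp add: seq_drop_def)

lemma seq_drop_seq_drop [simp]: "seq_drop m (seq_drop n c) = seq_drop (n + m) c"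
  by (simp add: seq_drop_def add.assoc)

lemma seq_drop_0 [simp]: "seq_drop 0 c = c"
  by (simp add: seq_drop_def)

lemma digit_seqsD: "c \<in> digit_seqs \<Longrightarrow> c n \<in> {1,2,3,4}"
  by (simp add: digit_seqs_def)

lemma seq_drop_digit_seqs: "c \<in> digit_seqs \<Longrightarrow> seq_drop n c \<in> digit_seqs"
  by (simp add: digit_seqs_def)

lemma foldr_ifs_map_apply:
  "foldr (\<lambda>k g. ifs_map l (c k) \<circ> g) [0..<n] g y = l^n * g y + (\<Sum>k<n. l^k * ifs_map l (c k) 0)"
proof (induction n arbitrary: g)
  case (Suc n)
  have "foldr (\<lambda>k g. ifs_map l (c k) \<circ> g) [0..<Suc n] g y
      = foldr (\<lambda>k g. ifs_map l (c k) \<circ> g) [0..<n] (ifs_map l (c n) \<circ> g) y"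
    by simp
  also have "\<dots> = l^n * (ifs_map l (c n) \<circ> g) y + (\<Sum>k<n. l^k * ifs_map l (c k) 0)"
    by (rule Suc.IH)
  also have "\<dots> = l^Suc n * g y + (\<Sum>k<Suc n. l^k * ifs_map l (c k) 0)"
    by (simp add: ifs_map_eq[of l "c n" "g y"] algebra_simps)
  finally show ?case .
qed simp

lemma ifs_comp_0: "ifs_comp l c n 0 = (\<Sum>k<n. l^k * ifs_map l (c k) 0)"
  using foldr_ifs_map_apply[of l c n id 0] by (simp add: ifs_comp_def)

lemma abs_ifs_map_0_le:
  assumes "\<bar>l\<bar> < 1"
  shows "\<bar>ifs_map l i 0\<bar> \<le> 4"
proof -
  have "l^2 \<le> 1"
    using assms by (simp add: abs_square_le_1)
  with assms show ?thesis
    by (auto simp: ifs_map_def abs_le_iff abs_less_iff; smt (verit) zero_le_power2)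
qed

lemma summable_coding_value:
  assumes "\<bar>l\<bar> < 1"
  shows "summable (\<lambda>k. l^k * ifs_map l (c k) 0)"
proof (rule summable_comparison_test')
  show "summable (\<lambda>k. 4 * \<bar>l\<bar>^k)"
    using assms by (simp add: summable_geometric)
  show "norm (l^k * ifs_map l (c k) 0) \<le> 4 * \<bar>l\<bar>^k" for k
    using mult_left_mono[OF abs_ifs_map_0_le[OF assms, of "c k"], of "\<bar>l\<bar>^k"]
    by (simp add: abs_mult power_abs mult.commute)
qed

lemma ifs_comp_0_tendsto_coding_value:
  "\<bar>l\<bar> < 1 \<Longrightarrow> (\<lambda>n. ifs_comp l c n 0) \<longlonglongrightarrow> coding_value l c"
  unfolding ifs_comp_0 coding_value_def by (rule summable_LIMSEQ[OF summable_coding_value])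

lemma codings_eq_coding_value:
  "\<bar>l\<bar> < 1 \<Longrightarrow> codings l x = {c \<in> digit_seqs. coding_value l c = x}"
  using ifs_comp_0_tendsto_coding_value[of l] LIMSEQ_unique
  by (auto simp: codings_def is_coding_def digit_seqs_def)

lemma coding_value_Suc:
  assumes "\<bar>l\<bar> < 1"
  shows "coding_value l (seq_drop n c) = ifs_map l (c n) 0 + l * coding_value l (seq_drop (Suc n) c)"
  using suminf_split_head[OF summable_coding_value[OF assms, of "seq_drop n c"]]
    suminf_mult[OF summable_coding_value[OF assms, of "seq_drop (Suc n) c"], of l]
  by (simp add: coding_value_def mult.assoc)

text \<open>Peeling off the digits of an orbit of the inverse branches reconstructs the point, because
  the remainder \<open>\<lambda>\<^sup>n y\<^sub>n\<close> vanishes on the bounded set \<open>K\<close>.\<close>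
lemma ex_coding_value_eq:
  assumes l: "\<bar>l\<bar> < 1" and K: "compact K" and inv: "K = (\<Union>i\<in>{1,2,3,4}. ifs_map l i ` K)"
    and x: "x \<in> K"
  shows "\<exists>c\<in>digit_seqs. coding_value l c = x"
proof -
  have "\<forall>y\<in>K. \<exists>i z. i \<in> {1,2,3,4} \<and> z \<in> K \<and> y = ifs_map l i z"
    using inv by blast
  then obtain I Z where I: "\<And>y. y \<in> K \<Longrightarrow> I y \<in> {1,2,3,4}" and Z: "\<And>y. y \<in> K \<Longrightarrow> Z y \<in> K"
    and IZ: "\<And>y. y \<in> K \<Longrightarrow> y = ifs_map l (I y) (Z y)"
    by metis
  define y where "y n = (Z ^^ n) x" for n
  define c where "c n = I (y n)" for n
  have yK: "y n \<in> K" for n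
    by (induction n) (simp_all add: y_def x Z)
  have c: "c \<in> digit_seqs"
    using I yK by (simp add: digit_seqs_def c_def)
  have partial: "ifs_comp l c n 0 = x - l^n * y n" for n
  proof (induction n)
    case (Suc n)
    have "y n = ifs_map l (c n) (y (Suc n))"
      using IZ[OF yK[of n]] by (simp add: y_def c_def)
    also have "\<dots> = l * y (Suc n) + ifs_map l (c n) 0"
      by (rule ifs_map_eq)
    finally have "y n = l * y (Suc n) + ifs_map l (c n) 0" .
    with Suc show ?case
      by (simp add: ifs_comp_0 algebra_simps)
  qed (simp add: y_def ifs_comp_0)
  obtain M where M: "\<And>z. z \<in> K \<Longrightarrow> \<bar>z\<bar> \<le> M"
    using compact_imp_bounded[OF K] by (auto simp: bounded_iff)
  have "(\<lambda>n. l^n * y n) \<longlonglongrightarrow> 0"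
  proof (rule Lim_null_comparison)
    show "(\<lambda>n. \<bar>l\<bar>^n * M) \<longlonglongrightarrow> 0"
      using l by (intro tendsto_mult_left_zero LIMSEQ_power_zero) auto
    show "\<forall>\<^sub>F n in sequentially. norm (l^n * y n) \<le> \<bar>l\<bar>^n * M"
      using M[OF yK] by (intro always_eventually allI) (simp add: abs_mult power_abs mult_left_mono)
  qed
  then have "(\<lambda>n. ifs_comp l c n 0) \<longlonglongrightarrow> x"
    unfolding partial using tendsto_diff[OF tendsto_const[of x]] by fastforce
  then have "coding_value l c = x"
    using LIMSEQ_unique ifs_comp_0_tendsto_coding_value[OF l] by blast
  with c show ?thesis
    by blast
qed

subsection \<open>Exchanging blocks does not change the value\<close>

lemma swap_blocks_Suc_notin: "n \<in> swap_blocks c \<Longrightarrow> Suc n \<notin> swap_blocks c"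
  by (auto simp: swap_blocks_def)

lemma flip_blocks_digit_seqs:
  assumes "c \<in> digit_seqs"
  shows "flip_blocks c F \<in> digit_seqs"
proof -
  have "5 - i \<in> {1,2,3,4}" if "i \<in> {1,2,3,4}" for i :: nat
    using that by auto
  then show ?thesis
    using assms by (simp add: digit_seqs_def flip_blocks_def)
qed

lemma flip_blocks_block:
  assumes "n \<in> F" "F \<subseteq> swap_blocks c"
  shows "flip_blocks c F n = 5 - c n" "flip_blocks c F (Suc n) = 5 - c (Suc n)"
  using assms swap_blocks_Suc_notin by (auto simp: flip_blocks_def)

lemma flip_blocks_partial_sum:
  fixes l :: real
  assumes F: "F \<subseteq> swap_blocks c"
  defines "e \<equiv> \<lambda>k. l^k * ifs_map l (flip_blocks c F k) 0 - l^k * ifs_map l (c k) 0"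
  shows "(\<Sum>k<n. e k) = (if n \<in> Suc ` F then e (n - 1) else 0)"
proof (induction n)
  case (Suc n)
  consider "n \<in> F" | m where "m \<in> F" "n = Suc m" | "n \<notin> F \<union> Suc ` F"
    by blast
  then show ?case
  proof cases
    case 1
    then have "n \<notin> Suc ` F"
      using F swap_blocks_Suc_notin by blast
    with 1 Suc show ?thesis
      by simp
  next
    case 2
    then have "n \<notin> F"
      using F swap_blocks_Suc_notin by blast
    moreover have "e m + e n = 0"
      using 2 F flip_blocks_block[OF 2(1) F]
      by (auto simp: e_def swap_blocks_def ifs_map_0_simps algebra_simps power2_eq_square)
    ultimately show ?thesis
      using 2 Suc by (simp add: inj_image_mem_iff)
  next
    case 3
    then have "e n = 0"
      by (simp add: e_def flip_blocks_def)
    with 3 Suc show ?thesis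
      by simp
  qed
qed simp

lemma coding_value_flip_blocks:
  assumes l: "\<bar>l\<bar> < 1" and F: "F \<subseteq> swap_blocks c"
  shows "coding_value l (flip_blocks c F) = coding_value l c"
proof -
  define e where "e \<equiv> \<lambda>k. l^k * ifs_map l (flip_blocks c F k) 0 - l^k * ifs_map l (c k) 0"
  have diff: "e sums (coding_value l (flip_blocks c F) - coding_value l c)"
    unfolding e_def coding_value_def by (intro sums_diff summable_sums summable_coding_value l)
  have partial: "(\<Sum>k<n. e k) = (if n \<in> Suc ` F then e (n - 1) else 0)" for n
    unfolding e_def by (rule flip_blocks_partial_sum[OF F])
  have "e sums 0"
    unfolding sums_def
  proof (rule Lim_null_comparison)
    show "(\<lambda>n. norm (e (n - 1))) \<longlonglongrightarrow> 0"
    proof (rule LIMSEQ_imp_Suc)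
      show "(\<lambda>n. norm (e (Suc n - 1))) \<longlonglongrightarrow> 0"
        using tendsto_norm_zero[OF summable_LIMSEQ_zero[OF sums_summable[OF diff]]] by simp
    qed
    show "\<forall>\<^sub>F n in sequentially. norm (\<Sum>k<n. e k) \<le> norm (e (n - 1))"
      by (intro always_eventually allI) (simp add: partial)
  qed
  then show ?thesis
    using sums_unique2[OF diff] by fastforce
qed

lemma flip_blocks_inj_on: "inj_on (flip_blocks c) (Pow (swap_blocks c))"
proof (rule inj_onI)
  have differ: "flip_blocks c F n \<noteq> flip_blocks c G n"
    if "F \<subseteq> swap_blocks c" "G \<subseteq> swap_blocks c" "n \<in> F" "n \<notin> G" for F G n
  proof -
    have "n \<notin> Suc ` G"
      using that swap_blocks_Suc_notin by blast
    moreover have "5 - c n \<noteq> c n"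
      by presburger
    ultimately show ?thesis
      using that by (simp add: flip_blocks_def)
  qed
  fix F G
  assume "F \<in> Pow (swap_blocks c)" "G \<in> Pow (swap_blocks c)" "flip_blocks c F = flip_blocks c G"
  then have "n \<in> F \<longleftrightarrow> n \<in> G" for n
    using differ[of F G n] differ[of G F n] by auto
  then show "F = G"
    by blast
qed

subsection \<open>Two codings of the same point differ by exchanged blocks\<close>

locale small_ratio =
  fixes l :: real
  assumes pos: "0 < l" and small: "l < (5 - sqrt 21) / 2"
begin

lemma less_quarter: "l < 1/4"
proof -
  have "9/2 < sqrt 21"
    by (rule real_less_rsqrt) (simp add: power2_eq_square)
  then show ?thesis
    using small by simp
qed

lemma abs_less_1: "\<bar>l\<bar> < 1"
  using pos less_quarter by simp

lemma quadratic_pos: "l^2 - 5 * l + 1 > 0"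
proof -
  have "(sqrt 21)^2 < (5 - 2 * l)^2"
    using small by (intro power_strict_mono) auto
  then show ?thesis
    by (simp add: power2_eq_square algebra_simps)
qed

lemma square_less: "l^2 < l"
  using pos less_quarter by (simp add: power2_eq_square)

lemma ifs_map_0_bounds: "i \<in> {1,2,3,4} \<Longrightarrow> 0 \<le> ifs_map l i 0 \<and> ifs_map l i 0 \<le> 1 - l"
  using square_less pos less_quarter quadratic_pos by (auto simp: ifs_map_0_simps)

lemma coding_value_bounds:
  assumes "c \<in> digit_seqs"
  shows "0 \<le> coding_value l c \<and> coding_value l c \<le> 1"
proof -
  have digit: "0 \<le> ifs_map l (c k) 0 \<and> ifs_map l (c k) 0 \<le> 1 - l" for k
    using ifs_map_0_bounds[OF digit_seqsD[OF assms]] .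
  have "coding_value l c \<le> (\<Sum>k. (1 - l) * l^k)"
    unfolding coding_value_def using digit pos less_quarter
    by (intro suminf_le summable_coding_value abs_less_1 summable_mult summable_geometric)
       (auto simp: mult.commute mult_left_mono)
  also have "\<dots> = 1"
    using pos less_quarter by (simp add: suminf_mult suminf_geometric)
  finally show ?thesis
    unfolding coding_value_def using digit pos
    by (auto intro!: suminf_nonneg summable_coding_value abs_less_1)
qed

lemma coding_value_first_digit_bounds:
  assumes "c \<in> digit_seqs"
  shows "ifs_map l (c n) 0 \<le> coding_value l (seq_drop n c)
    \<and> coding_value l (seq_drop n c) \<le> ifs_map l (c n) 0 + l"
  using coding_value_Suc[OF abs_less_1, of n c] pos
    coding_value_bounds[OF seq_drop_digit_seqs[OF assms, of "Suc n"]]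
  by (simp add: mult_le_cancel_left1)

text \<open>The intervals \<open>f\<^sub>i([0,1])\<close> are disjoint except for \<open>f\<^sub>2([0,1])\<close> and \<open>f\<^sub>3([0,1])\<close>; the gap
  between \<open>f\<^sub>3([0,1])\<close> and \<open>f\<^sub>4([0,1])\<close> amounts to \<open>\<lambda>\<^sup>2 - 5\<lambda> + 1 > 0\<close>, which is where the bound
  on \<open>\<lambda>\<close> comes from.\<close>
lemma first_level_separated:
  assumes "i \<in> {1,2,3,4}" "j \<in> {1,2,3,4}" "i < j" "(i, j) \<noteq> (2, 3)"
  shows "ifs_map l i 0 + l < ifs_map l j 0"
proof -
  have "(i, j) \<in> {(1,2), (1,3), (1,4), (2,4), (3,4)}"
    using assms by auto
  then show ?thesis
    using pos square_less less_quarter quadratic_pos by (auto simp: ifs_map_0_simps)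
qed

lemma first_digits_differ:
  assumes c: "c \<in> digit_seqs" and d: "d \<in> digit_seqs"
    and eq: "coding_value l c = coding_value l d" and ne: "c 0 \<noteq> d 0"
  shows "c 0 = 2 \<and> d 0 = 3 \<or> c 0 = 3 \<and> d 0 = 2"
proof -
  note digits = digit_seqsD[OF c, of 0] digit_seqsD[OF d, of 0]
  have "\<not> ifs_map l (c 0) 0 + l < ifs_map l (d 0) 0" "\<not> ifs_map l (d 0) 0 + l < ifs_map l (c 0) 0"
    using coding_value_first_digit_bounds[OF c, of 0] coding_value_first_digit_bounds[OF d, of 0] eq
    by auto
  then have "(c 0, d 0) = (2, 3) \<or> (d 0, c 0) = (2, 3)"
    using first_level_separated[OF digits] first_level_separated[OF digits(2,1)] ne
    by (metis linorder_neqE_nat)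
  then show ?thesis
    by auto
qed

text \<open>After \<open>f\<^sub>2\<close> versus \<open>f\<^sub>3\<close> the tails satisfy \<open>a = (1 - \<lambda>) + b\<close> with \<open>a, b \<in> [0,1]\<close>,
  which forces \<open>a\<close> into \<open>f\<^sub>4([0,1])\<close> and \<open>b\<close> into \<open>f\<^sub>1([0,1])\<close>.\<close>
lemma digits_after_2_3:
  assumes c: "c \<in> digit_seqs" and d: "d \<in> digit_seqs"
    and eq: "coding_value l c = coding_value l d" and c0: "c 0 = 2" and d0: "d 0 = 3"
  shows "c 1 = 4 \<and> d 1 = 1 \<and> coding_value l (seq_drop 2 c) = coding_value l (seq_drop 2 d)"
proof -
  define a b where "a = coding_value l (seq_drop 1 c)" and "b = coding_value l (seq_drop 1 d)"
  have "2 * l + l * a = 3 * l - l^2 + l * b"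
    using coding_value_Suc[OF abs_less_1, of 0 c] coding_value_Suc[OF abs_less_1, of 0 d] eq c0 d0
    by (simp add: a_def b_def ifs_map_0_simps)
  then have "l * a = l * (1 - l + b)"
    by (simp add: algebra_simps power2_eq_square)
  then have ab: "a = 1 - l + b"
    using pos by simp
  have "a \<le> 1" "0 \<le> b"
    using coding_value_bounds seq_drop_digit_seqs c d by (auto simp: a_def b_def)
  have c1: "c 1 = 4"
  proof (rule ccontr)
    assume "c 1 \<noteq> 4"
    then have "ifs_map l (c 1) 0 + l < ifs_map l 4 0"
      using digit_seqsD[OF c, of 1] by (intro first_level_separated) auto
    then show False
      using coding_value_first_digit_bounds[OF c, of 1] ab \<open>0 \<le> b\<close>
      by (simp add: a_def ifs_map_0_simps)
  qed
  have d1: "d 1 = 1"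
  proof (rule ccontr)
    assume "d 1 \<noteq> 1"
    then have "ifs_map l 1 0 + l < ifs_map l (d 1) 0"
      using digit_seqsD[OF d, of 1] by (intro first_level_separated) auto
    then show False
      using coding_value_first_digit_bounds[OF d, of 1] ab \<open>a \<le> 1\<close>
      by (simp add: b_def ifs_map_0_simps)
  qed
  have "l * coding_value l (seq_drop 2 c) = l * coding_value l (seq_drop 2 d)"
    using coding_value_Suc[OF abs_less_1, of 1] ab c1 d1
    by (simp add: a_def b_def ifs_map_0_simps numeral_2_eq_2)
  with c1 d1 pos show ?thesis
    by simp
qed

lemma coding_value_eq_step:
  assumes c: "c \<in> digit_seqs" and d: "d \<in> digit_seqs"
    and eq: "coding_value l (seq_drop n c) = coding_value l (seq_drop n d)"
  shows "c n = d n \<and> coding_value l (seq_drop (Suc n) c) = coding_value l (seq_drop (Suc n) d)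
    \<or> c n \<noteq> d n \<and> n \<in> swap_blocks c \<and> d n = 5 - c n \<and> d (Suc n) = 5 - c (Suc n)
      \<and> coding_value l (seq_drop (Suc (Suc n)) c) = coding_value l (seq_drop (Suc (Suc n)) d)"
proof (cases "c n = d n")
  case True
  then have "l * coding_value l (seq_drop (Suc n) c) = l * coding_value l (seq_drop (Suc n) d)"
    using eq coding_value_Suc[OF abs_less_1, of n] by simp
  with True pos show ?thesis
    by simp
next
  case False
  note c' = seq_drop_digit_seqs[OF c, of n] and d' = seq_drop_digit_seqs[OF d, of n]
  have "c n = 2 \<and> d n = 3 \<or> c n = 3 \<and> d n = 2"
    using first_digits_differ[OF c' d' eq] False by simp
  then show ?thesis
    using digits_after_2_3[OF c' d' eq] digits_after_2_3[OF d' c' eq[symmetric]]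
    by (auto simp: swap_blocks_def numeral_2_eq_2)
qed

text \<open>The positions where the tails of \<open>c\<close> and \<open>d\<close> have equal value are reached from \<open>0\<close> by
  steps of length one (equal digits) or two (an exchanged block), so every position is either
  such a synchronisation point or the second half of a block.\<close>
lemma coding_value_eq_imp_flip_blocks:
  assumes c: "c \<in> digit_seqs" and d: "d \<in> digit_seqs"
    and eq: "coding_value l c = coding_value l d"
  shows "d \<in> flip_blocks c ` Pow (swap_blocks c)"
proof -
  define S where "S = {n. coding_value l (seq_drop n c) = coding_value l (seq_drop n d)}"
  define F where "F = {n \<in> S. c n \<noteq> d n}"
  note step = coding_value_eq_step[OF c d]
  have reach: "n \<in> S \<or> n \<in> Suc ` F" for n
  proof (induction n)
    case 0
    then show ?case
      using eq by (simp add: S_def)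
  next
    case (Suc n)
    show ?case
    proof (cases "n \<in> S")
      case True
      with step[of n] show ?thesis
        by (auto simp: S_def F_def)
    next
      case False
      with Suc obtain m where "m \<in> F" "n = Suc m"
        by blast
      with step[of m] show ?thesis
        by (auto simp: S_def F_def)
    qed
  qed
  have F: "F \<subseteq> swap_blocks c"
    using step by (auto simp: S_def F_def)
  have "d n = flip_blocks c F n" for n
  proof (cases "n \<in> F")
    case True
    then show ?thesis
      using step flip_blocks_block[OF True F] by (auto simp: S_def F_def)
  next
    case False
    show ?thesis
    proof (cases "n \<in> Suc ` F")
      case True
      then obtain m where "m \<in> F" "n = Suc m"
        by blast
      then show ?thesis
        using step flip_blocks_block[OF \<open>m \<in> F\<close> F] by (auto simp: S_def F_def)
    next
      case False
      then show ?thesis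
        using reach[of n] \<open>n \<notin> F\<close> by (simp add: F_def flip_blocks_def)
    qed
  qed
  with F show ?thesis
    by blast
qed

lemma codings_eq_flip_blocks:
  assumes "c \<in> digit_seqs"
  shows "codings l (coding_value l c) = flip_blocks c ` Pow (swap_blocks c)"
  using assms coding_value_eq_imp_flip_blocks[OF assms] flip_blocks_digit_seqs
    coding_value_flip_blocks[OF abs_less_1]
  by (auto simp: codings_eq_coding_value[OF abs_less_1])

end

lemma uncountable_Pow:
  assumes "infinite B"
  shows "uncountable (Pow B)"
proof
  assume countable: "countable (Pow B)"
  have "countable ((\<lambda>x. {x}) ` B)"
    by (rule countable_subset[OF _ countable]) auto
  then have "countable B"
    by (rule countable_image_inj_on) (simp add: inj_on_def)
  then obtain e :: "_ \<Rightarrow> nat" where e: "bij_betw e B UNIV"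
    using countableE_infinite assms by blast
  obtain g :: "nat \<Rightarrow> _" where g: "bij_betw g UNIV (Pow B)"
    using countable_infiniteE' countable assms by (metis finite_Pow_iff)
  have "(g \<circ> e) ` B = Pow B"
    using e g unfolding image_comp[symmetric] bij_betw_def by simp
  then show False
    using Cantors_theorem by blast
qed

theorem corollary2p24:
  fixes l :: real and K :: "real set"
  assumes "0 < l" and "l < (5 - sqrt 21) / 2"
    and "compact K" and "K \<noteq> {}"
    and "K = (\<Union>i\<in>{1,2,3,4}. ifs_map l i ` K)"
  shows "\<forall>x\<in>K. (\<exists>k::nat. finite (codings l x) \<and> card (codings l x) = 2 ^ k)
                 \<or> uncountable (codings l x)"
proof
  fix x assume "x \<in> K"
  interpret small_ratio l
    using assms(1,2) by unfold_locales
  obtain c where c: "c \<in> digit_seqs" and x: "coding_value l c = x"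
    using ex_coding_value_eq[OF abs_less_1 assms(3,5) \<open>x \<in> K\<close>] by blast
  have codings: "codings l x = flip_blocks c ` Pow (swap_blocks c)"
    using codings_eq_flip_blocks[OF c] x by simp
  note inj = flip_blocks_inj_on[of c]
  show "(\<exists>k::nat. finite (codings l x) \<and> card (codings l x) = 2 ^ k) \<or> uncountable (codings l x)"
  proof (cases "finite (swap_blocks c)")
    case True
    then show ?thesis
      using codings inj by (simp add: card_image card_Pow)
  next
    case False
    then show ?thesis
      using codings inj uncountable_Pow countable_image_inj_on by metis
  qed
qed

end
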